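(* Let $(X,\mathcal{A})$ be a $(v,k,\lambda)$-BIBD. Then there exists a harmonious colouring of the Levi graph $\mathcal{L}(X,\mathcal{A})$ using $w$ colours if and only if there is a strong nesting $\phi:\mathcal{A}\to Y$ of $(X,\mathcal{A})$ with $X\subseteq Y$ and $|Y|=w$.
   Context: A $(v,k,\lambda)$-BIBD is a pair $(X,\mathcal{A})$ where $X$ is a set of $v$ points and $\mathcal{A}$ is a multiset of $k$-subsets of $X$ (blocks) such that every pair of distinct points lies in exactly $\lambda$ blocks. Given such $(X,\mathcal{A})$ and a set $Y\supseteq X$ with $|Y|=w$, a map $\phi:\mathcal{A}\to Y$ is a strong nesting if (1) $\phi(A)\notin A$ for every block $A\in\mathcal{A}$, and (2) the multiset of pairs $\{\{x,\phi(A)\}: A\in\mathcal{A},\ x\in A\}$ consists of distinct pairs. The Levi graph $\mathcal{L}(X,\mathcal{A})$ is the bipartite graph with vertex set $X\cup\mathcal{A}$ (each block of the multiset a separate vertex) and an edge $\{x,A\}$ whenever $x\in A$. A harmonious colouring of a graph is a map $c$ from its vertices to a set of colours such that adjacent vertices receive different colours and no two distinct edges $\{u,u'\}$, $\{z,z'\}$ satisfy $\{c(u),c(u')\}=\{c(z),c(z')\}$. *)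

theory Defs
  imports Main "HOL-Library.Infinite_Typeclass"
begin

text \<open>The multiset of blocks is represented by a
finite index set B of block labels together with blk :: 'b => 'a set; distinct labels
may carry equal blocks (repeated blocks of the multiset).\<close>
definition bibd :: "'a set \<Rightarrow> 'b set \<Rightarrow> ('b \<Rightarrow> 'a set) \<Rightarrow> nat \<Rightarrow> nat \<Rightarrow> nat \<Rightarrow> bool" where
  "bibd X B blk v k lam \<longleftrightarrow>
     finite X \<and> card X = v \<and> finite B \<and>
     2 \<le> k \<and> k < v \<and> 1 \<le> lam \<and>
     (\<forall>A\<in>B. blk A \<subseteq> X \<and> card (blk A) = k) \<and>
     (\<forall>x\<in>X. \<forall>y\<in>X. x \<noteq> y \<longrightarrow> card {A\<in>B. x \<in> blk A \<and> y \<in> blk A} = lam)"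

definition strong_nesting :: "'a set \<Rightarrow> 'b set \<Rightarrow> ('b \<Rightarrow> 'a set) \<Rightarrow> 'a set \<Rightarrow> ('b \<Rightarrow> 'a) \<Rightarrow> bool" where
  "strong_nesting X B blk Y phi \<longleftrightarrow>
     (\<forall>A\<in>B. phi A \<in> Y \<and> phi A \<notin> blk A) \<and>
     inj_on (\<lambda>(A, x). {x, phi A}) {(A, x). A \<in> B \<and> x \<in> blk A}"

text \<open>Levi graph: vertices Inl x (points) and Inr A (block labels).\<close>
definition levi_vertices :: "'a set \<Rightarrow> 'b set \<Rightarrow> ('a + 'b) set" where
  "levi_vertices X B = Inl ` X \<union> Inr ` B"

definition levi_edges :: "'a set \<Rightarrow> 'b set \<Rightarrow> ('b \<Rightarrow> 'a set) \<Rightarrow> ('a + 'b) set set" where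
  "levi_edges X B blk = {{Inl x, Inr A} | x A. A \<in> B \<and> x \<in> blk A}"

text \<open>Harmonious colouring of graph (V,E) (edges are 2-element sets) with colours from C.\<close>
definition harmonious_colouring :: "'v set \<Rightarrow> 'v set set \<Rightarrow> ('v \<Rightarrow> 'c) \<Rightarrow> 'c set \<Rightarrow> bool" where
  "harmonious_colouring V E c C \<longleftrightarrow>
     c ` V \<subseteq> C \<and>
     (\<forall>e\<in>E. \<forall>u\<in>e. \<forall>z\<in>e. u \<noteq> z \<longrightarrow> c u \<noteq> c z) \<and>
     (\<forall>e\<in>E. \<forall>e'\<in>E. e \<noteq> e' \<longrightarrow> c ` e \<noteq> c ` e')"

end

theory Submission
  imports Defs
begin

text \<open>A harmonious colouring of the Levi graph is the same thing as a proper colouring of the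
flags (A, x) whose colour pairs are distinct. In a BIBD any two points share a block, so a
harmonious colouring is injective on the points; identifying each point with its colour and
adding fresh points for the remaining colours, the colour of a block A becomes a point phi A,
and properness and distinctness of colour pairs turn into the two conditions of a strong
nesting. Conversely, numbering the points of Y turns a strong nesting into such a colouring.\<close>

abbreviation incidences :: "'b set \<Rightarrow> ('b \<Rightarrow> 'a set) \<Rightarrow> ('b \<times> 'a) set" where
  "incidences B blk \<equiv> {(A, x). A \<in> B \<and> x \<in> blk A}"

lemma levi_edges_eq_image:
  "levi_edges X B blk = (\<lambda>(A, x). {Inl x, Inr A}) ` incidences B blk"
  unfolding levi_edges_def by auto

lemma inj_on_levi_edge: "inj_on (\<lambda>(A, x). {Inl x, Inr A}) (incidences B blk)"
  by (auto simp: inj_on_def doubleton_eq_iff)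

lemma harmonious_colouring_levi_iff:
  "harmonious_colouring (levi_vertices X B) (levi_edges X B blk) c C \<longleftrightarrow>
     c ` levi_vertices X B \<subseteq> C \<and>
     (\<forall>(A, x) \<in> incidences B blk. c (Inl x) \<noteq> c (Inr A)) \<and>
     inj_on (\<lambda>(A, x). {c (Inl x), c (Inr A)}) (incidences B blk)"
proof -
  let ?edge = "\<lambda>(A, x). {Inl x, Inr A}"
  have proper: "(\<forall>e\<in>levi_edges X B blk. \<forall>u\<in>e. \<forall>z\<in>e. u \<noteq> z \<longrightarrow> c u \<noteq> c z) \<longleftrightarrow>
      (\<forall>(A, x) \<in> incidences B blk. c (Inl x) \<noteq> c (Inr A))"
    by (auto simp: levi_edges_eq_image) (metis)
  have "(\<forall>e\<in>levi_edges X B blk. \<forall>e'\<in>levi_edges X B blk. e \<noteq> e' \<longrightarrow> c ` e \<noteq> c ` e') \<longleftrightarrow>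
      inj_on (image c) (levi_edges X B blk)"
    unfolding inj_on_def by blast
  also have "\<dots> \<longleftrightarrow> inj_on (image c \<circ> ?edge) (incidences B blk)"
    unfolding levi_edges_eq_image using comp_inj_on_iff[OF inj_on_levi_edge] by blast
  also have "image c \<circ> ?edge = (\<lambda>(A, x). {c (Inl x), c (Inr A)})"
    by auto
  finally show ?thesis
    using proper unfolding harmonious_colouring_def by simp
qed

lemma harmonious_colouring_of_strong_nesting:
  assumes nest: "strong_nesting X B blk Y phi" and inj: "inj_on g Y"
    and "X \<subseteq> Y" and blocks: "\<forall>A\<in>B. blk A \<subseteq> X"
  shows "harmonious_colouring (levi_vertices X B) (levi_edges X B blk)
           (case_sum g (g \<circ> phi)) (g ` Y)"
proof -
  from nest have phi: "\<forall>A\<in>B. phi A \<in> Y \<and> phi A \<notin> blk A"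
    and nest_inj: "inj_on (\<lambda>(A, x). {x, phi A}) (incidences B blk)"
    by (simp_all add: strong_nesting_def)
  have flag_in_Y: "(\<lambda>(A, x). {x, phi A}) ` incidences B blk \<subseteq> Pow Y"
    using phi blocks \<open>X \<subseteq> Y\<close> by auto
  have "inj_on (image g \<circ> (\<lambda>(A, x). {x, phi A})) (incidences B blk)"
    using comp_inj_on[OF nest_inj inj_on_subset[OF inj_on_image_Pow[OF inj] flag_in_Y]] .
  moreover have "image g \<circ> (\<lambda>(A, x). {x, phi A}) = (\<lambda>(A, x). {g x, g (phi A)})"
    by auto
  moreover have "g x \<noteq> g (phi A)" if "A \<in> B" "x \<in> blk A" for A x
  proof
    assume "g x = g (phi A)"
    moreover have "x \<in> Y" "phi A \<in> Y"
      using that phi blocks \<open>X \<subseteq> Y\<close> by auto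
    ultimately have "x = phi A"
      using inj by (simp add: inj_on_eq_iff)
    with that phi show False by simp
  qed
  moreover have "case_sum g (g \<circ> phi) ` levi_vertices X B \<subseteq> g ` Y"
    using phi \<open>X \<subseteq> Y\<close> by (auto simp: levi_vertices_def)
  ultimately show ?thesis
    by (simp add: harmonious_colouring_levi_iff)
qed

lemma bibd_pair_in_block:
  assumes "bibd X B blk v k lam" "x \<in> X" "y \<in> X" "x \<noteq> y"
  shows "\<exists>A\<in>B. x \<in> blk A \<and> y \<in> blk A"
proof -
  have "card {A\<in>B. x \<in> blk A \<and> y \<in> blk A} = lam" "1 \<le> lam"
    using assms unfolding bibd_def by auto
  then have "{A\<in>B. x \<in> blk A \<and> y \<in> blk A} \<noteq> {}"
    by (metis card.empty not_one_le_zero)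
  then show ?thesis by blast
qed

lemma harmonious_colouring_levi_inj_on_points:
  assumes "harmonious_colouring (levi_vertices X B) (levi_edges X B blk) c C"
    and pairs_covered: "\<forall>x\<in>X. \<forall>y\<in>X. x \<noteq> y \<longrightarrow> (\<exists>A\<in>B. x \<in> blk A \<and> y \<in> blk A)"
  shows "inj_on (\<lambda>x. c (Inl x)) X"
proof (rule inj_onI, rule ccontr)
  fix x y
  assume "x \<in> X" "y \<in> X" and same_colour: "c (Inl x) = c (Inl y)" and "x \<noteq> y"
  then obtain A where "A \<in> B" "x \<in> blk A" "y \<in> blk A"
    using pairs_covered by blast
  moreover have harm_inj: "inj_on (\<lambda>(A, x). {c (Inl x), c (Inr A)}) (incidences B blk)"
    using assms(1) by (simp add: harmonious_colouring_levi_iff)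
  ultimately have "(A, x) = (A, y)"
    using same_colour inj_onD[OF harm_inj, of "(A, x)" "(A, y)"] by simp
  with \<open>x \<noteq> y\<close> show False by simp
qed

lemma extend_inj_on_to_bij_betw:
  fixes f :: "'a::infinite \<Rightarrow> 'c"
  assumes "finite X" "inj_on f X" "f ` X \<subseteq> C" "finite C"
  shows "\<exists>Y g. X \<subseteq> Y \<and> finite Y \<and> bij_betw g Y C \<and> (\<forall>x\<in>X. g x = f x)"
proof -
  have "infinite (UNIV - X)"
    using \<open>finite X\<close> by (simp add: infinite_UNIV)
  then obtain F where F: "finite F" "card F = card (C - f ` X)" "F \<subseteq> UNIV - X"
    using infinite_arbitrarily_large by blast
  then obtain h where "bij_betw h F (C - f ` X)"
    using \<open>finite C\<close> by (metis finite_Diff finite_same_card_bij)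
  then have "bij_betw (\<lambda>x. if x \<in> X then f x else h x) (X \<union> F) (f ` X \<union> (C - f ` X))"
    using bij_betw_disjoint_Un[OF inj_on_imp_bij_betw[OF \<open>inj_on f X\<close>]] F(3) by blast
  moreover have "f ` X \<union> (C - f ` X) = C"
    using \<open>f ` X \<subseteq> C\<close> by blast
  ultimately show ?thesis
    using \<open>finite X\<close> F(1) by (intro exI[of _ "X \<union> F"]) auto
qed

lemma strong_nesting_of_harmonious_colouring:
  assumes harm: "harmonious_colouring (levi_vertices X B) (levi_edges X B blk) c C"
    and g: "bij_betw g Y C" and blocks: "\<forall>A\<in>B. blk A \<subseteq> X"
    and g_points: "\<forall>x\<in>X. g x = c (Inl x)"
  shows "strong_nesting X B blk Y (\<lambda>A. inv_into Y g (c (Inr A)))"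
proof -
  define phi where "phi A = inv_into Y g (c (Inr A))" for A
  from harm have into_C: "c ` levi_vertices X B \<subseteq> C"
    and proper: "\<forall>(A, x) \<in> incidences B blk. c (Inl x) \<noteq> c (Inr A)"
    and harm_inj: "inj_on (\<lambda>(A, x). {c (Inl x), c (Inr A)}) (incidences B blk)"
    by (simp_all add: harmonious_colouring_levi_iff)
  have phi: "phi A \<in> Y" "g (phi A) = c (Inr A)" if "A \<in> B" for A
  proof -
    have "c (Inr A) \<in> g ` Y"
      using that into_C g by (auto simp: levi_vertices_def bij_betw_def)
    then show "phi A \<in> Y" "g (phi A) = c (Inr A)"
      unfolding phi_def by (simp_all add: inv_into_into f_inv_into_f)
  qed
  have "phi A \<notin> blk A" if "A \<in> B" for A
    using phi[OF that] proper g_points blocks that by fastforce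
  moreover have "inj_on (\<lambda>(A, x). {x, phi A}) (incidences B blk)"
  proof (rule inj_onI, clarify)
    fix A x A' x'
    assume flags: "A \<in> B" "x \<in> blk A" "A' \<in> B" "x' \<in> blk A'"
      and "{x, phi A} = {x', phi A'}"
    then have "g ` {x, phi A} = g ` {x', phi A'}" by simp
    moreover have "x \<in> X" "x' \<in> X"
      using flags blocks by auto
    ultimately have "{c (Inl x), c (Inr A)} = {c (Inl x'), c (Inr A')}"
      using flags phi g_points by simp
    then show "A = A' \<and> x = x'"
      using inj_onD[OF harm_inj, of "(A, x)" "(A', x')"] flags by simp
  qed
  ultimately show ?thesis
    using phi unfolding strong_nesting_def phi_def by blast
qed

lemma ex_strong_nesting_of_harmonious_colouring:
  fixes X :: "'a::infinite set"
  assumes harm: "harmonious_colouring (levi_vertices X B) (levi_edges X B blk) c C"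
    and "finite C" "finite X" and blocks: "\<forall>A\<in>B. blk A \<subseteq> X"
    and pairs_covered: "\<forall>x\<in>X. \<forall>y\<in>X. x \<noteq> y \<longrightarrow> (\<exists>A\<in>B. x \<in> blk A \<and> y \<in> blk A)"
  shows "\<exists>Y phi. X \<subseteq> Y \<and> finite Y \<and> card Y = card C \<and> strong_nesting X B blk Y phi"
proof -
  have "inj_on (\<lambda>x. c (Inl x)) X"
    using harmonious_colouring_levi_inj_on_points[OF harm pairs_covered] .
  moreover have "(\<lambda>x. c (Inl x)) ` X \<subseteq> C"
    using harm by (auto simp: harmonious_colouring_def levi_vertices_def)
  ultimately have "\<exists>Y g. X \<subseteq> Y \<and> finite Y \<and> bij_betw g Y C \<and> (\<forall>x\<in>X. g x = c (Inl x))"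
    by (rule extend_inj_on_to_bij_betw[OF \<open>finite X\<close> _ _ \<open>finite C\<close>])
  then obtain Y g where "X \<subseteq> Y" "finite Y" and g: "bij_betw g Y C"
    and g_points: "\<forall>x\<in>X. g x = c (Inl x)"
    by blast
  then show ?thesis
    using strong_nesting_of_harmonious_colouring[OF harm g blocks g_points]
      bij_betw_same_card[OF g]
    by blast
qed

lemma ex_harmonious_colouring_of_strong_nesting:
  assumes nest: "strong_nesting X B blk Y phi" and "finite Y" "X \<subseteq> Y"
    and blocks: "\<forall>A\<in>B. blk A \<subseteq> X"
  shows "\<exists>c. harmonious_colouring (levi_vertices X B) (levi_edges X B blk) c {0..<card Y}"
proof -
  obtain g where g: "bij_betw g Y {0..<card Y}"
    using \<open>finite Y\<close> ex_bij_betw_finite_nat by blast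
  show ?thesis
    using harmonious_colouring_of_strong_nesting[OF nest bij_betw_imp_inj_on[OF g] \<open>X \<subseteq> Y\<close> blocks]
      bij_betw_imp_surj_on[OF g]
    by auto
qed

theorem theorem5p1:
  fixes X :: "'a::infinite set" and B :: "'b set" and blk :: "'b \<Rightarrow> 'a set"
    and v k lam w :: nat
  assumes "bibd X B blk v k lam"
  shows "(\<exists>(C :: nat set) c. finite C \<and> card C = w \<and>
            harmonious_colouring (levi_vertices X B) (levi_edges X B blk) c C)
         \<longleftrightarrow> (\<exists>Y phi. X \<subseteq> Y \<and> finite Y \<and> card Y = w \<and> strong_nesting X B blk Y phi)"
    (is "?colouring \<longleftrightarrow> ?nesting")
proof -
  have "finite X" and blocks: "\<forall>A\<in>B. blk A \<subseteq> X"
    using assms unfolding bibd_def by auto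
  have pairs_covered: "\<forall>x\<in>X. \<forall>y\<in>X. x \<noteq> y \<longrightarrow> (\<exists>A\<in>B. x \<in> blk A \<and> y \<in> blk A)"
    using bibd_pair_in_block[OF assms] by blast
  show ?thesis
  proof
    assume ?colouring
    then show ?nesting
      using ex_strong_nesting_of_harmonious_colouring[OF _ _ \<open>finite X\<close> blocks pairs_covered]
      by metis
  next
    assume ?nesting
    then show ?colouring
      using ex_harmonious_colouring_of_strong_nesting[OF _ _ _ blocks]
      by (metis card_atLeastLessThan diff_zero finite_atLeastLessThan)
  qed
qed

end
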